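(* Every $2\times2$ column-stochastic matrix is divisible in $s(2)$.
   Context: $s(2)$ denotes the set of $2\times 2$ real matrices with non-negative entries whose columns each sum to $1$; it is a monoid under matrix multiplication whose group of units is the set of $2\times2$ permutation matrices. $A\in s(2)$ is indivisible if for every decomposition $A=BC$ with $B,C\in s(2)$ exactly one of $B,C$ is a permutation matrix, and divisible otherwise. *)

theory Defs
  imports "HOL-Analysis.Analysis" "HOL-Combinatorics.Permutations"
begin

text \<open>s(2): 2x2 real matrices with non-negative entries whose columns each sum to 1.
  A matrix A :: real^2^2 has entry A $ i $ j in row i, column j.\<close>
definition s2 :: "(real^2^2) set" where
  "s2 = {A. (\<forall>i j. 0 \<le> A $ i $ j) \<and> (\<forall>j. (\<Sum>i\<in>UNIV. A $ i $ j) = 1)}"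

definition perm_mat :: "real^2^2 \<Rightarrow> bool" where
  "perm_mat A \<longleftrightarrow> (\<exists>p. p permutes (UNIV :: 2 set) \<and>
      A = (\<chi> i j. if i = p j then 1 else 0))"

definition indivisible :: "real^2^2 \<Rightarrow> bool" where
  "indivisible A \<longleftrightarrow> (\<forall>B\<in>s2. \<forall>C\<in>s2. A = B ** C \<longrightarrow> (perm_mat B \<noteq> perm_mat C))"

definition divisible :: "real^2^2 \<Rightarrow> bool" where
  "divisible A \<longleftrightarrow> \<not> indivisible A"

end

theory Submission
  imports Defs
begin

text \<open>A matrix of s(2) is determined by its first row (x, y), and its determinant is x - y.
  The permutation matrices are exactly the members of s(2) with determinant of modulus 1,
  and determinants multiply. So if A is a permutation matrix, A = A I; otherwise
  |x - y| < 1, and writing the columns of A as convex combinations of (p, 1 - p) and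
  (q, 1 - q), where [p, q] is an interval of length strictly between |x - y| and 1
  containing x and y, gives A = B C with |det B| = q - p < 1 and
  |det C| = |x - y| / (q - p) < 1.\<close>

definition stoch2 :: "real \<Rightarrow> real \<Rightarrow> real^2^2" where
  "stoch2 x y = (\<chi> i j. if i = 1 then (if j = 1 then x else y)
                              else (if j = 1 then 1 - x else 1 - y))"

lemma stoch2_in_s2_iff: "stoch2 x y \<in> s2 \<longleftrightarrow> x \<in> {0..1} \<and> y \<in> {0..1}"
  by (auto simp: s2_def stoch2_def sum_2 forall_2)

lemma s2_stoch2E:
  assumes "A \<in> s2"
  obtains x y where "A = stoch2 x y" "x \<in> {0..1}" "y \<in> {0..1}"
proof
  show "A = stoch2 (A$1$1) (A$1$2)"
    using assms by (auto simp: s2_def stoch2_def sum_2 vec_eq_iff forall_2 eq_diff_eq')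
  with assms show "A$1$1 \<in> {0..1}" "A$1$2 \<in> {0..1}"
    by (metis stoch2_in_s2_iff)+
qed

lemma det_stoch2: "det (stoch2 x y) = x - y"
  by (simp add: det_2 stoch2_def algebra_simps)

lemma stoch2_mult:
  "stoch2 a b ** stoch2 c d = stoch2 (c * a + (1 - c) * b) (d * a + (1 - d) * b)"
  by (simp add: stoch2_def matrix_matrix_mult_def vec_eq_iff forall_2 sum_2 algebra_simps)

lemma perm_mat_stoch2_iff:
  "perm_mat (stoch2 x y) \<longleftrightarrow> (x = 1 \<and> y = 0) \<or> (x = 0 \<and> y = 1)"
proof
  assume "perm_mat (stoch2 x y)"
  then obtain p where p: "p permutes (UNIV :: 2 set)"
    and eq: "stoch2 x y = (\<chi> i j. if i = p j then 1 else 0)"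
    unfolding perm_mat_def by blast
  have "x = (if p 1 = 1 then 1 else 0)" "y = (if p 2 = 1 then 1 else 0)"
    using arg_cong[OF eq, of "\<lambda>M. M$1$1"] arg_cong[OF eq, of "\<lambda>M. M$1$2"]
    by (auto simp: stoch2_def)
  moreover have "p 1 \<noteq> p 2"
    using permutes_inj[OF p] by (simp add: inj_eq)
  ultimately show "(x = 1 \<and> y = 0) \<or> (x = 0 \<and> y = 1)"
    by (metis exhaust_2)
next
  assume "(x = 1 \<and> y = 0) \<or> (x = 0 \<and> y = 1)"
  then show "perm_mat (stoch2 x y)"
  proof
    assume "x = 1 \<and> y = 0"
    then show ?thesis unfolding perm_mat_def
      by (intro exI[of _ id]) (auto simp: stoch2_def vec_eq_iff forall_2 permutes_id)
  next
    assume "x = 0 \<and> y = 1"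
    then show ?thesis unfolding perm_mat_def
      by (intro exI[of _ "Transposition.transpose 1 2"])
        (auto simp: stoch2_def vec_eq_iff forall_2 permutes_swap_id)
  qed
qed

lemma perm_mat_iff_abs_det:
  assumes "A \<in> s2"
  shows "perm_mat A \<longleftrightarrow> \<bar>det A\<bar> = 1"
  using assms by (elim s2_stoch2E) (auto simp: perm_mat_stoch2_iff det_stoch2 abs_if)

lemma stoch2_eq_mult:
  assumes "p \<noteq> q"
  shows "stoch2 a b = stoch2 p q ** stoch2 ((q - a) / (q - p)) ((q - b) / (q - p))"
proof -
  have "(q - x) / (q - p) * p + (1 - (q - x) / (q - p)) * q = x" for x
    using assms by (simp add: divide_simps) (simp add: algebra_simps)
  then show ?thesis
    by (simp add: stoch2_mult)
qed

lemma s2_factor_non_perm: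
  assumes "A \<in> s2" and "\<not> perm_mat A"
  shows "\<exists>B\<in>s2. \<exists>C\<in>s2. A = B ** C \<and> \<not> perm_mat B \<and> \<not> perm_mat C"
proof -
  obtain x y where A: "A = stoch2 x y" and xy: "x \<in> {0..1}" "y \<in> {0..1}"
    using assms(1) by (rule s2_stoch2E)
  have "\<bar>x - y\<bar> < 1"
    using xy assms(2) perm_mat_iff_abs_det[OF assms(1)] det_stoch2 A by auto
  define p q where "p = min x y / 2" and "q = (1 + max x y) / 2"
  have len: "q - p = (1 + \<bar>x - y\<bar>) / 2"
    unfolding p_def q_def by (simp add: min_def max_def abs_if field_simps)
  then have "\<bar>x - y\<bar> < q - p" "q - p < 1"
    using \<open>\<bar>x - y\<bar> < 1\<close> by auto
  have "p \<le> x" "x \<le> q" "p \<le> y" "y \<le> q" "0 \<le> p" "q \<le> 1"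
    using xy unfolding p_def q_def by auto
  define B C where "B = stoch2 p q" and "C = stoch2 ((q - x) / (q - p)) ((q - y) / (q - p))"
  have "A = B ** C"
    unfolding A B_def C_def using \<open>q - p < 1\<close> \<open>\<bar>x - y\<bar> < q - p\<close>
    by (intro stoch2_eq_mult) auto
  moreover have "B \<in> s2" "C \<in> s2"
    unfolding B_def C_def stoch2_in_s2_iff
    using \<open>p \<le> x\<close> \<open>x \<le> q\<close> \<open>p \<le> y\<close> \<open>y \<le> q\<close> \<open>0 \<le> p\<close> \<open>q \<le> 1\<close>
    by (auto simp: divide_simps)
  moreover have "\<bar>det B\<bar> < 1"
    using \<open>q - p < 1\<close> \<open>\<bar>x - y\<bar> < q - p\<close> by (simp add: B_def det_stoch2)
  moreover have "det C = (y - x) / (q - p)"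
    by (simp add: C_def det_stoch2 diff_divide_distrib[symmetric])
  then have "\<bar>det C\<bar> < 1"
    using \<open>\<bar>x - y\<bar> < q - p\<close> by (simp add: abs_divide abs_minus_commute)
  ultimately show ?thesis
    using perm_mat_iff_abs_det by (intro bexI[of _ B] bexI[of _ C]) auto
qed

theorem fact2:
  assumes "A \<in> s2"
  shows "divisible A"
proof -
  have "\<exists>B\<in>s2. \<exists>C\<in>s2. A = B ** C \<and> perm_mat B = perm_mat C"
  proof (cases "perm_mat A")
    case True
    have "mat 1 = stoch2 1 0"
      by (simp add: mat_def stoch2_def vec_eq_iff forall_2)
    then have "mat 1 \<in> s2" "perm_mat (mat 1)"
      by (simp_all add: stoch2_in_s2_iff perm_mat_stoch2_iff)
    then show ?thesis
      using True assms by (metis matrix_mul_rid)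
  next
    case False
    then show ?thesis
      using s2_factor_non_perm[OF assms] by blast
  qed
  then show ?thesis
    unfolding divisible_def indivisible_def by blast
qed

end
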